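(* Let $G$ be a cyclic group of order $n\ge 4$. Then $\{2,n-2,n-1\}\in\mathcal L(G)$.
   Context: For a finite abelian group $G$, a sequence over $G$ is an element of the free abelian monoid $\mathcal F(G)$ with basis $G$ (a finite unordered list of elements of $G$, repetitions allowed). $\mathcal B(G)$ is the monoid of zero-sum sequences over $G$ (including the empty sequence). An atom is a minimal zero-sum sequence, i.e. a nonempty zero-sum sequence that is not a product of two nonempty zero-sum sequences. For $B\in\mathcal B(G)$, $\mathsf L(B)=\{k\in\mathbb N_0: B \text{ is a product of } k \text{ atoms}\}$, and $\mathcal L(G)=\{\mathsf L(B):B\in\mathcal B(G)\}$. *)

theory Defs
  imports "HOL-Algebra.Elementary_Groups" "HOL-Algebra.FiniteProduct" "HOL-Library.Multiset"
begin

text \<open>Sequences over G are finite multisets of elements of carrier G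
  (elements of the free abelian monoid with basis G).\<close>

definition seq_over :: "('a, 'b) monoid_scheme \<Rightarrow> 'a multiset \<Rightarrow> bool" where
  "seq_over G S \<longleftrightarrow> set_mset S \<subseteq> carrier G"

definition seq_sum :: "('a, 'b) monoid_scheme \<Rightarrow> 'a multiset \<Rightarrow> 'a" where
  "seq_sum G S = finprod G (\<lambda>g. g [^]\<^bsub>G\<^esub> count S g) (set_mset S)"

definition zero_sum :: "('a, 'b) monoid_scheme \<Rightarrow> 'a multiset \<Rightarrow> bool" where
  "zero_sum G S \<longleftrightarrow> seq_over G S \<and> seq_sum G S = \<one>\<^bsub>G\<^esub>"

definition is_atom :: "('a, 'b) monoid_scheme \<Rightarrow> 'a multiset \<Rightarrow> bool" where
  "is_atom G A \<longleftrightarrow> zero_sum G A \<and> A \<noteq> {#} \<and>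
     \<not> (\<exists>U V. A = U + V \<and> U \<noteq> {#} \<and> V \<noteq> {#} \<and> zero_sum G U \<and> zero_sum G V)"

definition lengths :: "('a, 'b) monoid_scheme \<Rightarrow> 'a multiset \<Rightarrow> nat set" where
  "lengths G B = {k. \<exists>F :: 'a multiset multiset. size F = k \<and> (\<forall>A\<in>#F. is_atom G A) \<and> sum_mset F = B}"

definition system_of_lengths :: "('a, 'b) monoid_scheme \<Rightarrow> nat set set" where
  "system_of_lengths G = {lengths G B | B. zero_sum G B}"

end

theory Submission
  imports Defs "HOL-Algebra.Multiplicative_Group"
begin

text \<open>Write G additively with generator g and let B = g^(n-2) (-g)^(n-2) (2g) (-2g). It factors as
  [g^(n-2) (2g)] [(-g)^(n-2) (-2g)], as [(-g)^2 (2g)] [g^2 (-2g)] [g (-g)]^(n-4) and as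
  [(2g) (-2g)] [g (-g)]^(n-2), of lengths 2, n - 2 and n - 1. Conversely, the integer exponent sum
  of a subsequence of B lies in [-n, n], so an atom dividing B is g (-g), (2g) (-2g), or one of the
  four atoms above that contain exactly one of 2g, -2g. As B contains two entries from {2g, -2g} and
  equally many copies of g and -g, counting entries shows that no other length occurs.\<close>

lemma subset_mset_plusE:
  assumes "X \<subseteq># U + V"
  obtains U' V' where "U' \<subseteq># U" "V' \<subseteq># V" "X = U' + V'"
proof (rule that)
  show "X \<inter># U \<subseteq># U" by simp
  show "X - X \<inter># U \<subseteq># V" using assms by (auto simp: subseteq_mset_def le_diff_conv add.commute)
  show "X = X \<inter># U + (X - X \<inter># U)" by (simp add: multiset_eq_iff min_def)
qed

lemma subset_mset_two_replicatesE:
  assumes "X \<subseteq># replicate_mset i x + replicate_mset j y"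
  obtains i' j' where "i' \<le> i" "j' \<le> j" "X = replicate_mset i' x + replicate_mset j' y"
proof -
  obtain U V where "U \<subseteq># replicate_mset i x" "V \<subseteq># replicate_mset j y" "X = U + V"
    using assms by (rule subset_mset_plusE)
  then show thesis by (metis that msubseteq_replicate_msetE)
qed

lemma count_sum_mset: "count (\<Sum>\<^sub># F) x = (\<Sum>X\<in>#F. count X x)"
  by (induction F) auto

lemma filter_sum_mset: "filter_mset P (\<Sum>\<^sub># F) = (\<Sum>X\<in>#F. filter_mset P X)"
  by (induction F) auto

lemma sum_mset_eq_two_cases:
  fixes t :: "'a \<Rightarrow> nat"
  assumes "\<forall>x\<in>#M. 0 < t x" and "(\<Sum>x\<in>#M. t x) = 2"
  shows "(\<exists>x. M = {#x#} \<and> t x = 2) \<or> (\<exists>x y. M = {#x, y#} \<and> t x = 1 \<and> t y = 1)"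
proof (cases M)
  case empty
  then show ?thesis using assms by simp
next
  case M: (add x M')
  show ?thesis
  proof (cases M')
    case empty
    then show ?thesis using assms M by simp
  next
    case M': (add y M'')
    have pos: "0 < t x" "0 < t y" "\<forall>z\<in>#M''. 0 < t z" using assms(1) M M' by auto
    have "t x + t y + (\<Sum>z\<in>#M''. t z) = 2" using assms(2) M M' by simp
    then have "t x = 1" "t y = 1" "(\<Sum>z\<in>#M''. t z) = 0" using pos by linarith+
    moreover from this(3) have "M'' = {#}" using pos(3) by fastforce
    ultimately show ?thesis using M M' by auto
  qed
qed

lemma dvd_abs_le_cases:
  fixes z :: int
  assumes "int n dvd z" and "\<bar>z\<bar> \<le> int n"
  shows "z = 0 \<or> z = int n \<or> z = - int n"
proof -
  obtain t where z: "z = int n * t" using assms(1) by (auto simp: dvd_def)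
  have "n = 0 \<or> t = -1 \<or> t = 0 \<or> t = 1"
    using assms(2) mult_le_cancel_left_pos[of "int n" "\<bar>t\<bar>" 1]
    unfolding z abs_mult by (cases "n = 0") (auto simp: abs_le_iff)
  then show ?thesis using z by auto
qed

lemma (in comm_group) seq_sum_closed:
  assumes "seq_over G S"
  shows "seq_sum G S \<in> carrier G"
  using assms by (auto simp: seq_sum_def seq_over_def intro!: finprod_closed)

lemma (in comm_group) seq_sum_empty [simp]: "seq_sum G {#} = \<one>"
  by (simp add: seq_sum_def)

lemma (in comm_group) seq_sum_add_mset:
  assumes "seq_over G S" and "x \<in> carrier G"
  shows "seq_sum G (add_mset x S) = x \<otimes> seq_sum G S"
proof -
  let ?A = "insert x (set_mset S)"
  have A: "?A \<subseteq> carrier G" using assms by (auto simp: seq_over_def)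
  have "seq_sum G S = (\<Otimes>y\<in>?A. y [^] count S y)"
    unfolding seq_sum_def
    by (rule finprod_mono_neutral_cong_right[symmetric]) (use A in \<open>auto simp: Pi_def not_in_iff\<close>)
  moreover have "seq_sum G (add_mset x S) = (\<Otimes>y\<in>?A. (if y = x then y else \<one>) \<otimes> y [^] count S y)"
    unfolding seq_sum_def
    by (rule finprod_cong') (use A in \<open>auto simp: nat_pow_Suc2 nat_pow_mult m_comm\<close>)
  moreover have "(\<Otimes>y\<in>?A. (if y = x then y else \<one>) \<otimes> y [^] count S y)
      = (\<Otimes>y\<in>?A. if y = x then y else \<one>) \<otimes> (\<Otimes>y\<in>?A. y [^] count S y)"
    by (rule finprod_multf) (use A in \<open>auto simp: Pi_def\<close>)
  moreover have "(\<Otimes>y\<in>?A. if y = x then y else \<one>) = x"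
    using finprod_singleton_swap[of x ?A "\<lambda>y. y"] A by auto
  ultimately show ?thesis by simp
qed

lemma (in comm_group) seq_sum_plus:
  assumes "seq_over G U" and "seq_over G V"
  shows "seq_sum G (U + V) = seq_sum G U \<otimes> seq_sum G V"
  using assms(2)
proof (induction V)
  case empty
  then show ?case using seq_sum_closed[OF assms(1)] by simp
next
  case (add x V)
  then have "seq_over G (U + V)" "seq_over G V" "x \<in> carrier G"
    using assms(1) by (auto simp: seq_over_def)
  with add.IH show ?case
    using seq_sum_closed[OF assms(1)] seq_sum_closed[of V] by (simp add: seq_sum_add_mset m_lcomm)
qed

lemma (in comm_group) seq_sum_int_pows:
  assumes "x \<in> carrier G"
  shows "seq_sum G (image_mset (\<lambda>k::int. x [^] k) K) = x [^] (\<Sum>\<^sub># K)"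
proof (induction K)
  case (add k K)
  have "seq_over G (image_mset (\<lambda>k::int. x [^] k) K)"
    using assms by (auto simp: seq_over_def)
  then show ?case using add.IH assms by (simp add: seq_sum_add_mset int_pow_mult)
qed simp

lemma is_atomI:
  assumes "zero_sum G A" and "A \<noteq> {#}"
    and "\<And>U. U \<subseteq># A \<Longrightarrow> U \<noteq> {#} \<Longrightarrow> U \<noteq> A \<Longrightarrow> \<not> zero_sum G U"
  shows "is_atom G A"
  unfolding is_atom_def using assms
  by (metis add_cancel_right_right mset_subset_eq_add_left)

lemma (in comm_group) atom_eq_if_zero_sum_subseteq:
  assumes "is_atom G A" and "Z \<subseteq># A" and "Z \<noteq> {#}" and "zero_sum G Z"
  shows "A = Z"
proof (rule ccontr)
  assume "A \<noteq> Z"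
  obtain V where A: "A = Z + V" using assms(2) by (metis subset_mset.le_iff_add)
  with \<open>A \<noteq> Z\<close> have "V \<noteq> {#}" by auto
  have over: "seq_over G Z" "seq_over G V"
    using assms(1) A by (auto simp: is_atom_def zero_sum_def seq_over_def)
  have "\<one> = \<one> \<otimes> seq_sum G V"
    using assms(1,4) A seq_sum_plus[OF over] by (simp add: is_atom_def zero_sum_def)
  then have "zero_sum G V" using over seq_sum_closed[of V] by (simp add: zero_sum_def)
  then show False using assms(1,3,4) A \<open>V \<noteq> {#}\<close> unfolding is_atom_def by blast
qed

locale power_sequences = comm_group G for G (structure) +
  fixes g :: 'a and n :: nat
  assumes generator_closed: "g \<in> carrier G" and ord_generator: "ord g = n"
begin

lemma zero_sum_int_pows_iff:
  "zero_sum G (image_mset (\<lambda>k::int. g [^] k) K) \<longleftrightarrow> int n dvd \<Sum>\<^sub># K"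
proof -
  have "seq_over G (image_mset (\<lambda>k::int. g [^] k) K)"
    using generator_closed by (auto simp: seq_over_def)
  then show ?thesis
    by (simp add: zero_sum_def seq_sum_int_pows generator_closed int_pow_eq_id ord_generator)
qed

lemma is_atom_two_powers:
  fixes p q :: int
  assumes "0 < i + j" and "int n dvd int i * p + int j * q"
    and "\<And>i' j'. i' \<le> i \<Longrightarrow> j' \<le> j \<Longrightarrow> \<bar>int i' * p + int j' * q\<bar> \<le> int n"
    and "\<And>i' j'. i' \<le> i \<Longrightarrow> j' \<le> j \<Longrightarrow> int i' * p + int j' * q \<in> {0, int n, - int n}
      \<Longrightarrow> i' = 0 \<and> j' = 0 \<or> i' = i \<and> j' = j"
  shows "is_atom G (replicate_mset i (g [^] p) + replicate_mset j (g [^] q))" (is "is_atom G ?A")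
proof (rule is_atomI)
  have zero_sum_iff: "zero_sum G (replicate_mset i' (g [^] p) + replicate_mset j' (g [^] q))
      \<longleftrightarrow> int n dvd int i' * p + int j' * q" for i' j'
    using zero_sum_int_pows_iff[of "replicate_mset i' p + replicate_mset j' q"] by simp
  show "zero_sum G ?A" using assms(2) zero_sum_iff by simp
  show "?A \<noteq> {#}" using assms(1) by simp
  fix U assume U: "U \<subseteq># ?A" "U \<noteq> {#}" "U \<noteq> ?A"
  then obtain i' j' where ij: "i' \<le> i" "j' \<le> j"
    and U_eq: "U = replicate_mset i' (g [^] p) + replicate_mset j' (g [^] q)"
    by (elim subset_mset_two_replicatesE)
  show "\<not> zero_sum G U"
  proof
    assume "zero_sum G U"
    with dvd_abs_le_cases[OF _ assms(3)[OF ij]] U_eq zero_sum_iff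
    have "int i' * p + int j' * q \<in> {0, int n, - int n}" by simp
    then show False using assms(4)[OF ij] U(2,3) U_eq by auto
  qed
qed

end

locale three_lengths_sequence = power_sequences +
  assumes four_le_order: "4 \<le> n"
begin

text \<open>Additively, e, f, a, b are g, -g, 2g, -2g; note that a = b when n = 4.\<close>

definition "e = g [^] (1::int)"
definition "f = g [^] (-1::int)"
definition "a = g [^] (2::int)"
definition "b = g [^] (-2::int)"

definition "B = replicate_mset (n - 2) e + replicate_mset (n - 2) f + {#a, b#}"

definition "seq_ef = {#e, f#}"
definition "seq_ab = {#a, b#}"
definition "seq_ae = add_mset a (replicate_mset (n - 2) e)"
definition "seq_af = add_mset a (replicate_mset 2 f)"
definition "seq_bf = add_mset b (replicate_mset (n - 2) f)"
definition "seq_be = add_mset b (replicate_mset 2 e)"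

lemma letters_distinct: "e \<noteq> f" "e \<noteq> a" "e \<noteq> b" "f \<noteq> a" "f \<noteq> b"
  unfolding e_def f_def a_def b_def int_pow_eq[OF generator_closed] ord_generator
  using dvd_abs_le_cases[of n] four_le_order by fastforce+

lemmas letters_distinct' = letters_distinct letters_distinct[symmetric]

lemma zero_sum_letters_iff:
  "zero_sum G (replicate_mset i e + replicate_mset j f + replicate_mset k a + replicate_mset l b)
    \<longleftrightarrow> int n dvd int i - int j + 2 * int k - 2 * int l"
  using zero_sum_int_pows_iff[of "replicate_mset i 1 + replicate_mset j (-1)
      + replicate_mset k 2 + replicate_mset l (-2)"]
  by (simp add: e_def f_def a_def b_def algebra_simps)

lemma zero_sum_B: "zero_sum G B"
  using zero_sum_letters_iff[of "n - 2" "n - 2" 1 1] by (simp add: B_def add_mset_commute)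

lemma is_atom_ef: "is_atom G seq_ef"
proof -
  have "is_atom G (replicate_mset 1 e + replicate_mset 1 f)"
    unfolding e_def f_def by (rule is_atom_two_powers) (use four_le_order in \<open>auto simp: le_Suc_eq\<close>)
  then show ?thesis by (simp add: seq_ef_def add_mset_commute)
qed

lemma is_atom_ab: "is_atom G seq_ab"
proof -
  have "is_atom G (replicate_mset 1 a + replicate_mset 1 b)"
    unfolding a_def b_def by (rule is_atom_two_powers) (use four_le_order in \<open>auto simp: le_Suc_eq\<close>)
  then show ?thesis by (simp add: seq_ab_def add_mset_commute)
qed

lemma is_atom_ae: "is_atom G seq_ae"
proof -
  have "is_atom G (replicate_mset 1 a + replicate_mset (n - 2) e)"
    unfolding a_def e_def by (rule is_atom_two_powers) (use four_le_order in \<open>auto simp: le_Suc_eq\<close>)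
  then show ?thesis by (simp add: seq_ae_def)
qed

lemma is_atom_af: "is_atom G seq_af"
proof -
  have "is_atom G (replicate_mset 1 a + replicate_mset 2 f)"
    unfolding a_def f_def by (rule is_atom_two_powers) (use four_le_order in \<open>auto simp: le_Suc_eq\<close>)
  then show ?thesis by (simp add: seq_af_def)
qed

lemma is_atom_bf: "is_atom G seq_bf"
proof -
  have "is_atom G (replicate_mset 1 b + replicate_mset (n - 2) f)"
    unfolding b_def f_def by (rule is_atom_two_powers) (use four_le_order in \<open>auto simp: le_Suc_eq\<close>)
  then show ?thesis by (simp add: seq_bf_def)
qed

lemma is_atom_be: "is_atom G seq_be"
proof -
  have "is_atom G (replicate_mset 1 b + replicate_mset 2 e)"
    unfolding b_def e_def by (rule is_atom_two_powers) (use four_le_order in \<open>auto simp: le_Suc_eq\<close>)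
  then show ?thesis by (simp add: seq_be_def)
qed

lemma subseteq_BE:
  assumes "X \<subseteq># B"
  obtains i j k l where "i \<le> n - 2" "j \<le> n - 2" "k \<le> 1" "l \<le> 1"
    and "X = replicate_mset i e + replicate_mset j f + replicate_mset k a + replicate_mset l b"
proof -
  have "X \<subseteq># (replicate_mset (n - 2) e + replicate_mset (n - 2) f)
      + (replicate_mset 1 a + replicate_mset 1 b)"
    using assms by (simp add: B_def add_mset_commute)
  then obtain U V where U: "U \<subseteq># replicate_mset (n - 2) e + replicate_mset (n - 2) f"
    and V: "V \<subseteq># replicate_mset 1 a + replicate_mset 1 b" and "X = U + V"
    by (rule subset_mset_plusE)
  moreover obtain i j where "i \<le> n - 2" "j \<le> n - 2" "U = replicate_mset i e + replicate_mset j f"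
    using U by (rule subset_mset_two_replicatesE)
  moreover obtain k l where "k \<le> 1" "l \<le> 1" "V = replicate_mset k a + replicate_mset l b"
    using V by (rule subset_mset_two_replicatesE)
  ultimately show thesis using that by (simp add: add.assoc)
qed

lemma atom_subseteq_B_cases:
  assumes atom: "is_atom G X" and "X \<subseteq># B"
  shows "X \<in> {seq_ef, seq_ab, seq_ae, seq_af, seq_bf, seq_be}"
proof -
  obtain i j k l where bounds: "i \<le> n - 2" "j \<le> n - 2" "k \<le> 1" "l \<le> 1"
    and X: "X = replicate_mset i e + replicate_mset j f + replicate_mset k a + replicate_mset l b"
    using assms(2) by (rule subseteq_BE)
  consider "1 \<le> i" "1 \<le> j" | "1 \<le> k" "1 \<le> l" | "i = 0 \<or> j = 0" "k = 0 \<or> l = 0"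
    by linarith
  then show ?thesis
  proof cases
    case 1
    then have "seq_ef \<subseteq># X" using letters_distinct' by (auto simp: X seq_ef_def subseteq_mset_def)
    then have "X = seq_ef"
      using atom is_atom_ef by (auto simp: is_atom_def intro: atom_eq_if_zero_sum_subseteq)
    then show ?thesis by simp
  next
    case 2
    then have "seq_ab \<subseteq># X" using letters_distinct' by (auto simp: X seq_ab_def subseteq_mset_def)
    then have "X = seq_ab"
      using atom is_atom_ab by (auto simp: is_atom_def intro: atom_eq_if_zero_sum_subseteq)
    then show ?thesis by simp
  next
    case 3
    have dvd: "int n dvd int i - int j + 2 * int k - 2 * int l"
      using atom by (simp add: is_atom_def X zero_sum_letters_iff)
    have "\<bar>int i - int j + 2 * int k - 2 * int l\<bar> \<le> int n"
      using 3 bounds four_le_order by auto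
    with dvd_abs_le_cases[OF dvd]
    have sum_cases: "int i - int j + 2 * int k - 2 * int l \<in> {0, int n, - int n}" by simp
    have "0 < i + j + k + l" using atom by (auto simp: X is_atom_def)
    moreover have "k = 0 \<or> k = 1" "l = 0 \<or> l = 1" using bounds by auto
    ultimately have
      "(i, j, k, l) \<in> {(n - 2, 0, 1, 0), (0, 2, 1, 0), (0, n - 2, 0, 1), (2, 0, 0, 1)}"
      using sum_cases 3 bounds four_le_order by (elim disjE) auto
    then show ?thesis by (auto simp: X seq_ae_def seq_af_def seq_bf_def seq_be_def)
  qed
qed

text \<open>Filtering rather than adding the counts of a and b avoids counting twice when a = b.\<close>

definition num_doubles :: "'a multiset \<Rightarrow> nat" where
  "num_doubles X = size (filter_mset (\<lambda>x. x \<noteq> e \<and> x \<noteq> f) X)"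

lemma num_doubles_sum_mset: "num_doubles (\<Sum>\<^sub># F) = (\<Sum>X\<in>#F. num_doubles X)"
  unfolding num_doubles_def by (simp add: filter_sum_mset image_mset.compositionality o_def)

lemma num_doubles_atoms:
  "num_doubles seq_ef = 0" "num_doubles seq_ab = 2" "num_doubles seq_ae = 1"
  "num_doubles seq_af = 1" "num_doubles seq_bf = 1" "num_doubles seq_be = 1"
  using letters_distinct' by (simp_all add: num_doubles_def seq_ef_def seq_ab_def seq_ae_def
      seq_af_def seq_bf_def seq_be_def)

lemma factorization_B_cases:
  assumes atoms: "\<forall>X\<in>#F. is_atom G X" and sum_F: "\<Sum>\<^sub># F = B"
  obtains c where "F = add_mset seq_ab (replicate_mset c seq_ef)"
  | c X Y where "X \<in> {seq_ae, seq_af, seq_bf, seq_be}" "Y \<in> {seq_ae, seq_af, seq_bf, seq_be}"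
      "F = {#X, Y#} + replicate_mset c seq_ef"
proof -
  define c where "c = count F seq_ef"
  define F' where "F' = filter_mset (\<lambda>X. X \<noteq> seq_ef) F"
  have F_eq: "F = replicate_mset c seq_ef + F'"
    unfolding c_def F'_def by (metis filter_eq_replicate_mset multiset_partition)
  have shapes: "X \<in> {seq_ab, seq_ae, seq_af, seq_bf, seq_be}" if "X \<in># F'" for X
  proof -
    have X: "X \<in># F" "X \<noteq> seq_ef" using that by (auto simp: F'_def)
    then have "X \<subseteq># B" unfolding sum_F[symmetric] by (metis mset_subset_eq_add_left sum_mset.remove)
    then show ?thesis using atom_subseteq_B_cases atoms X by auto
  qed
  have "(\<Sum>X\<in>#F'. num_doubles X) = (\<Sum>X\<in>#F. num_doubles X)"
    by (simp add: F_eq num_doubles_atoms)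
  also have "\<dots> = num_doubles B" using sum_F num_doubles_sum_mset by metis
  also have "\<dots> = 2" using letters_distinct' by (simp add: num_doubles_def B_def)
  finally have "(\<Sum>X\<in>#F'. num_doubles X) = 2" .
  moreover have "\<forall>X\<in>#F'. 0 < num_doubles X"
    using shapes num_doubles_atoms by fastforce
  ultimately consider X where "F' = {#X#}" "num_doubles X = 2"
    | X Y where "F' = {#X, Y#}" "num_doubles X = 1" "num_doubles Y = 1"
    using sum_mset_eq_two_cases by blast
  then show thesis
  proof cases
    case (1 X)
    then have "X \<in># F'" by simp
    from shapes[OF this] have "X = seq_ab" using 1(2) by (auto simp: num_doubles_atoms)
    then show thesis using that(1) 1(1) F_eq by simp
  next
    case (2 X Y)
    have "X \<in># F'" "Y \<in># F'" using 2(1) by simp_all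
    then have "X \<in> {seq_ae, seq_af, seq_bf, seq_be}" "Y \<in> {seq_ae, seq_af, seq_bf, seq_be}"
      using shapes 2(2,3) num_doubles_atoms by fastforce+
    then show thesis using that(2) 2(1) F_eq by (simp add: add.commute)
  qed
qed

lemma count_e_f_mixed_atoms:
  assumes "X \<in> {seq_ae, seq_af, seq_bf, seq_be}"
  shows "(count X e, count X f) \<in> {(n - 2, 0), (0, 2), (0, n - 2), (2, 0)}"
  using assms letters_distinct' by (auto simp: seq_ae_def seq_af_def seq_bf_def seq_be_def)

lemma two_mixed_atoms_length:
  fixes c x1 y1 x2 y2 :: nat
  assumes "(x1, y1) \<in> {(n - 2, 0), (0, 2), (0, n - 2), (2, 0)}"
    and "(x2, y2) \<in> {(n - 2, 0), (0, 2), (0, n - 2), (2, 0)}"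
    and "n - 2 = c + x1 + x2" and "n - 2 = c + y1 + y2"
  shows "c + 2 \<in> {2, n - 2, n - 1}"
  using assms four_le_order by auto

lemma lengths_B_subset: "lengths G B \<subseteq> {2, n - 2, n - 1}"
proof
  fix N assume "N \<in> lengths G B"
  then obtain F where size_F: "size F = N" and atoms: "\<forall>X\<in>#F. is_atom G X"
    and sum_F: "\<Sum>\<^sub># F = B"
    by (auto simp: lengths_def)
  have count_B: "count B x = count (\<Sum>\<^sub># F) x" for x using sum_F by simp
  from atoms sum_F show "N \<in> {2, n - 2, n - 1}"
  proof (cases rule: factorization_B_cases)
    case (1 c)
    have "n - 2 = c"
      using count_B[of e] letters_distinct'
      by (simp add: 1 count_sum_mset B_def seq_ab_def seq_ef_def)
    then have "N = n - 1" using size_F four_le_order by (simp add: 1)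
    then show ?thesis by simp
  next
    case (2 c X Y)
    have "n - 2 = c + count X e + count Y e" "n - 2 = c + count X f + count Y f"
      using count_B[of e] count_B[of f] letters_distinct'
      by (simp_all add: 2 count_sum_mset B_def seq_ef_def)
    then have "c + 2 \<in> {2, n - 2, n - 1}"
      by (rule two_mixed_atoms_length[OF count_e_f_mixed_atoms[OF 2(1)]
            count_e_f_mixed_atoms[OF 2(2)]])
    moreover have "N = c + 2" using size_F by (simp add: 2)
    ultimately show ?thesis by simp
  qed
qed

lemma lengths_B_supset: "{2, n - 2, n - 1} \<subseteq> lengths G B"
proof -
  have length_of: "N \<in> lengths G B"
    if "\<Sum>\<^sub># F = B" and "\<forall>X\<in>#F. X \<in> {seq_ef, seq_ab, seq_ae, seq_af, seq_bf, seq_be}"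
      and "size F = N" for F N
    using that is_atom_ef is_atom_ab is_atom_ae is_atom_af is_atom_bf is_atom_be
    unfolding lengths_def by (intro CollectI exI[of _ F]) auto
  have "\<Sum>\<^sub># {#seq_ae, seq_bf#} = B"
    using letters_distinct' by (auto simp: B_def seq_ae_def seq_bf_def intro!: multiset_eqI)
  then have "2 \<in> lengths G B" by (rule length_of) auto
  moreover have "\<Sum>\<^sub># ({#seq_af, seq_be#} + replicate_mset (n - 4) seq_ef) = B"
    using letters_distinct' four_le_order
    by (auto simp: B_def seq_af_def seq_be_def seq_ef_def count_sum_mset intro!: multiset_eqI)
  then have "n - 2 \<in> lengths G B" by (rule length_of) (use four_le_order in auto)
  moreover have "\<Sum>\<^sub># (add_mset seq_ab (replicate_mset (n - 2) seq_ef)) = B"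
    using letters_distinct'
    by (auto simp: B_def seq_ab_def seq_ef_def count_sum_mset intro!: multiset_eqI)
  then have "n - 1 \<in> lengths G B" by (rule length_of) (use four_le_order in auto)
  ultimately show ?thesis by blast
qed

lemma lengths_B: "lengths G B = {2, n - 2, n - 1}"
  using lengths_B_subset lengths_B_supset by blast

end

theorem lemma4p2:
  fixes G :: "('a, 'b) monoid_scheme" and n :: nat
  assumes "group G" and "cyclic_group G" and "order G = n" and "n \<ge> 4"
  shows "{2, n - 2, n - 1} \<in> system_of_lengths G"
proof -
  interpret group G by fact
  obtain g where g: "g \<in> carrier G" "subgroup_generated G {g} = G"
    using assms(2) unfolding cyclic_group_def by blast
  have "ord g = n" using cyclic_order_is_ord[OF g(1)] g(2) assms(3) by simp
  then interpret three_lengths_sequence G g n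
    using cyclic_imp_abelian_group[OF assms(2)] g(1) assms(4)
    by (auto intro!: three_lengths_sequence.intro power_sequences.intro
        simp: three_lengths_sequence_axioms_def power_sequences_axioms_def)
  show ?thesis using zero_sum_B lengths_B unfolding system_of_lengths_def by blast
qed

end
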